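(* Let $G=G_1*\cdots*G_r$ ($r\ge2$) be a free product of finite connected simple rooted graphs $G_i=(V_i,E_i,o_i)$ with $|V_i|\ge2$. Then each $\mathcal M_i$ is a polynomial with nonnegative integer coefficients of degree at most $|V_i|-1$, $1/\mu(G)$ is the smallest positive zero of the polynomial $$D(z)=\prod_{k=1}^r\bigl(1+\mathcal M_k(z)\bigr)-\sum_{i=1}^r\mathcal M_i(z)\prod_{j\ne i}\bigl(1+\mathcal M_j(z)\bigr)$$ (for $r=2$, of $1-\mathcal M_1(z)\mathcal M_2(z)$), and in particular the connective constant $\mu(G)$ is an algebraic number.
   Context: Free product of graphs: let $G_1=(V_1,E_1,o_1),\dots,G_r=(V_r,E_r,o_r)$ be rooted graphs with pairwise distinct vertex sets, $\mathcal I=\{1,\dots,r\}$, and $V_i^\times=V_i\setminus\{o_i\}$; set $\tau(x)=i$ for $x\in V_i^\times$. The vertex set $V$ consists of the empty word $o$ together with all finite words $x_1x_2\cdots x_n$ with letters $x_j\in\bigcup_i V_i^\times$ such that $\tau(x_j)\neq\tau(x_{j+1})$; set $\tau(x_1\cdots x_n)=\tau(x_n)$. Each $V_i$ is regarded as a subset of $V$ with $o_i$ identified with $o$, and concatenation $wx$ is defined when the last letter of $w$ and first letter of $x$ have different types (with $wo_i=w$ if $\tau(w)\ne i$). Edges: for $i\in\mathcal I$ and $x,y\in V_i$ with $x\sim y$ in $G_i$, put an edge $wx\sim wy$ for every $w\in V$ with $\tau(w)\neq i$. The free product is $G=(V,E,o)$. A self-avoiding walk (SAW) of length $n$ from a vertex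 is a path $[v_0,\dots,v_n]$ of adjacent vertices starting at that vertex with no vertex repeated. $\sigma_n$ is the number of $n$-step SAWs in $G$ starting at $o$, $\sigma_n^{(i)}$ the number of $n$-step SAWs in $G_i$ starting at $o_i$, $\mathcal M_i(z)=\sum_{n\ge1}\sigma^{(i)}_n z^n$, and $\mu(G)=\lim_{n\to\infty}\sigma_n^{1/n}$ is the connective constant. *)

theory Defs
  imports "HOL-Analysis.Analysis" "HOL-Computational_Algebra.Polynomial"
begin

definition saw_count :: "'v set \<Rightarrow> ('v \<Rightarrow> 'v \<Rightarrow> bool) \<Rightarrow> 'v \<Rightarrow> nat \<Rightarrow> nat" where
  "saw_count V adj s n = card {p. length p = Suc n \<and> hd p = s \<and> distinct p \<and> set p \<subseteq> V
                                 \<and> (\<forall>j<n. adj (p ! j) (p ! Suc j))}"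

text \<open>To make vertex sets
  pairwise disjoint, a letter x \<in> V i - {rt i} is tagged as (i, x); its type is i.\<close>
definition fp_vertices :: "(nat \<Rightarrow> 'a set) \<Rightarrow> (nat \<Rightarrow> 'a) \<Rightarrow> nat \<Rightarrow> (nat \<times> 'a) list set" where
  "fp_vertices V rt r = {w. (\<forall>(i, x) \<in> set w. i < r \<and> x \<in> V i \<and> x \<noteq> rt i)
                           \<and> (\<forall>j. Suc j < length w \<longrightarrow> fst (w ! j) \<noteq> fst (w ! Suc j))}"

definition fp_emb :: "(nat \<Rightarrow> 'a) \<Rightarrow> nat \<Rightarrow> 'a \<Rightarrow> (nat \<times> 'a) list" where
  "fp_emb rt i x = (if x = rt i then [] else [(i, x)])"

definition fp_adj :: "(nat \<Rightarrow> 'a set) \<Rightarrow> (nat \<Rightarrow> 'a \<Rightarrow> 'a \<Rightarrow> bool) \<Rightarrow> (nat \<Rightarrow> 'a) \<Rightarrow> nat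
                      \<Rightarrow> (nat \<times> 'a) list \<Rightarrow> (nat \<times> 'a) list \<Rightarrow> bool" where
  "fp_adj V E rt r w w' \<longleftrightarrow>
     (\<exists>u i x y. i < r \<and> u \<in> fp_vertices V rt r \<and> (u = [] \<or> fst (last u) \<noteq> i)
               \<and> x \<in> V i \<and> y \<in> V i \<and> E i x y
               \<and> w = u @ fp_emb rt i x \<and> w' = u @ fp_emb rt i y)"

definition fp_saw :: "(nat \<Rightarrow> 'a set) \<Rightarrow> (nat \<Rightarrow> 'a \<Rightarrow> 'a \<Rightarrow> bool) \<Rightarrow> (nat \<Rightarrow> 'a) \<Rightarrow> nat \<Rightarrow> nat \<Rightarrow> nat" where
  "fp_saw V E rt r n = saw_count (fp_vertices V rt r) (fp_adj V E rt r) [] n"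

definition fp_connective_constant :: "(nat \<Rightarrow> 'a set) \<Rightarrow> (nat \<Rightarrow> 'a \<Rightarrow> 'a \<Rightarrow> bool) \<Rightarrow> (nat \<Rightarrow> 'a) \<Rightarrow> nat \<Rightarrow> real" where
  "fp_connective_constant V E rt r = lim (\<lambda>n. root n (real (fp_saw V E rt r n)))"

definition Mgf :: "(nat \<Rightarrow> 'a set) \<Rightarrow> (nat \<Rightarrow> 'a \<Rightarrow> 'a \<Rightarrow> bool) \<Rightarrow> (nat \<Rightarrow> 'a) \<Rightarrow> nat \<Rightarrow> real \<Rightarrow> real" where
  "Mgf V E rt i z = (\<Sum>n. real (saw_count (V i) (E i) (rt i) (Suc n)) * z ^ Suc n)"

definition Dfun :: "(nat \<Rightarrow> 'a set) \<Rightarrow> (nat \<Rightarrow> 'a \<Rightarrow> 'a \<Rightarrow> bool) \<Rightarrow> (nat \<Rightarrow> 'a) \<Rightarrow> nat \<Rightarrow> real \<Rightarrow> real" where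
  "Dfun V E rt r z = (\<Prod>k<r. 1 + Mgf V E rt k z)
      - (\<Sum>i<r. Mgf V E rt i z * (\<Prod>j\<in>{..<r} - {i}. 1 + Mgf V E rt j z))"

end

theory Submission
  imports Defs
begin

text \<open>
  A self-avoiding walk from the root \<open>o\<close> of \<open>G\<close> enters some factor \<open>G\<^sub>i\<close> with its first step
  and then never returns to \<open>o\<close>, so all its later vertices are words beginning with a letter of
  type \<open>i\<close>. Such a walk is a self-avoiding walk of some length \<open>k \<ge> 1\<close> in \<open>G\<^sub>i\<close>, ending at a
  vertex \<open>a \<noteq> o\<^sub>i\<close>, possibly followed by a self-avoiding walk from the root of the copy of \<open>G\<close>
  attached at \<open>a\<close> whose first step enters a factor \<open>j \<noteq> i\<close>. Hence the numbers \<open>A\<^sub>i(n)\<close> of such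
  walks satisfy \<open>A\<^sub>i(n) = \<Sum>\<^sub>k \<sigma>\<^sup>(\<^sup>i\<^sup>)\<^sub>k c\<^sub>i(n - k)\<close> with \<open>c\<^sub>i(0) = 1\<close> and
  \<open>c\<^sub>i(m) = \<Sum>\<^sub>j\<^sub>\<noteq>\<^sub>i A\<^sub>j(m)\<close>, and \<open>\<sigma>\<^sub>n = \<Sum>\<^sub>i A\<^sub>i(n)\<close>.

  For generating functions this reads \<open>A\<^sub>i = M\<^sub>i (1 + \<Sum>\<^sub>j\<^sub>\<noteq>\<^sub>i A\<^sub>j)\<close>, solved by
  \<open>A\<^sub>i = M\<^sub>i / (1 + M\<^sub>i) / (1 - F)\<close> with \<open>F = \<Sum>\<^sub>i M\<^sub>i / (1 + M\<^sub>i)\<close>; note that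
  \<open>D = (1 - F) \<Prod>\<^sub>k (1 + M\<^sub>k)\<close>. Since \<open>F\<close> increases strictly from \<open>F(0) = 0\<close> to \<open>F(1) \<ge> 1\<close>,
  there is a unique \<open>z\<^sub>0 \<in> (0, 1]\<close> with \<open>F(z\<^sub>0) = 1\<close>, the smallest positive zero of \<open>D\<close>.
  Instead of complex analysis we use the recursion directly: induction on \<open>n\<close> gives
  \<open>A\<^sub>i(n) \<le> C\<^sub>z z\<^sup>-\<^sup>n\<close> for every \<open>z < z\<^sub>0\<close> and \<open>A\<^sub>i(n) \<ge> c z\<^sub>0\<^sup>-\<^sup>n\<close>, so \<open>\<sigma>\<^sub>n\<^sup>1\<^sup>/\<^sup>n \<rightarrow> 1/z\<^sub>0\<close>.
  Finally \<open>D\<close> is a polynomial with integer coefficients and \<open>D(0) = 1\<close>, so \<open>z\<^sub>0\<close> and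
  \<open>\<mu>(G) = 1/z\<^sub>0\<close> are algebraic.
\<close>

definition saws :: "'v set \<Rightarrow> ('v \<Rightarrow> 'v \<Rightarrow> bool) \<Rightarrow> 'v \<Rightarrow> nat \<Rightarrow> 'v list set" where
  "saws V adj s n = {p. length p = Suc n \<and> hd p = s \<and> distinct p \<and> set p \<subseteq> V
                        \<and> (\<forall>j<n. adj (p ! j) (p ! Suc j))}"

lemma saw_count_eq_card: "saw_count V adj s n = card (saws V adj s n)"
  by (simp add: saw_count_def saws_def)

lemma saws_0_iff: "p \<in> saws V adj s 0 \<longleftrightarrow> p = [s] \<and> s \<in> V"
  by (auto simp: saws_def length_Suc_conv)

lemma saws_Suc_iff:
  "p \<in> saws V adj s (Suc n) \<longleftrightarrow>
     (\<exists>p0 w. p = p0 @ [w] \<and> p0 \<in> saws V adj s n \<and> adj (last p0) w \<and> w \<notin> set p0 \<and> w \<in> V)"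
proof
  assume p: "p \<in> saws V adj s (Suc n)"
  then have len: "length p = Suc (Suc n)" by (simp add: saws_def)
  define p0 where "p0 = butlast p"
  have pe: "p = p0 @ [last p]" using len by (cases p rule: rev_cases) (auto simp: p0_def)
  have lp0: "length p0 = Suc n" using len by (simp add: p0_def)
  have nth0: "\<And>j. j < Suc n \<Longrightarrow> p0 ! j = p ! j" using pe lp0 by (metis nth_append)
  have "hd p0 = hd p" using lp0 pe by (metis Zero_not_Suc hd_append length_0_conv)
  then have p0: "p0 \<in> saws V adj s n"
    using p pe lp0 nth0 by (auto simp: saws_def p0_def distinct_butlast in_set_butlastD)
  have "last p0 = p ! n"
    using lp0 nth0 by (metis diff_Suc_1 last_conv_nth lessI list.size(3) nat.distinct(1))
  moreover have "last p = p ! Suc n"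
    using len by (metis diff_Suc_1 last_conv_nth list.size(3) nat.distinct(1))
  ultimately have "adj (last p0) (last p)" using p by (simp add: saws_def)
  moreover have "last p \<notin> set p0" using p pe by (simp add: saws_def) (metis distinct_append pe disjoint_iff list.set_intros(1))
  moreover have "last p \<in> set p" using len by (intro last_in_set) auto
  then have "last p \<in> V" using p by (auto simp: saws_def)
  ultimately show "\<exists>p0 w. p = p0 @ [w] \<and> p0 \<in> saws V adj s n \<and> adj (last p0) w \<and> w \<notin> set p0 \<and> w \<in> V"
    using pe p0 by metis
next
  assume "\<exists>p0 w. p = p0 @ [w] \<and> p0 \<in> saws V adj s n \<and> adj (last p0) w \<and> w \<notin> set p0 \<and> w \<in> V"
  then obtain p0 w where pe: "p = p0 @ [w]" and p0: "p0 \<in> saws V adj s n"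
    and a: "adj (last p0) w" and "w \<notin> set p0" "w \<in> V" by blast
  have lp0: "length p0 = Suc n" using p0 by (simp add: saws_def)
  have "adj (p ! j) (p ! Suc j)" if "j < Suc n" for j
  proof (cases "j < n")
    case True then show ?thesis using p0 lp0 pe by (auto simp: saws_def nth_append)
  next
    case False
    then have "j = n" using that by simp
    moreover have "last p0 = p0 ! n"
      using lp0 by (metis diff_Suc_1 last_conv_nth list.size(3) nat.distinct(1))
    ultimately show ?thesis using a pe lp0 by (simp add: nth_append)
  qed
  then show "p \<in> saws V adj s (Suc n)"
    using p0 pe lp0 \<open>w \<notin> set p0\<close> \<open>w \<in> V\<close> by (auto simp: saws_def hd_append)
qed

lemma sawsD:
  assumes "p \<in> saws V adj s n"
  shows "length p = Suc n" "hd p = s" "distinct p" "set p \<subseteq> V" "\<And>j. j < n \<Longrightarrow> adj (p ! j) (p ! Suc j)"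
  using assms by (auto simp: saws_def)

lemma saws_nth_0: "p \<in> saws V adj s n \<Longrightarrow> p ! 0 = s"
  by (cases p) (auto simp: saws_def)

lemma saws_nth_neq_start:
  assumes p: "p \<in> saws V adj s n" and "0 < t" "t \<le> n"
  shows "p ! t \<noteq> s"
proof
  assume "p ! t = s"
  then have "p ! t = p ! 0" using saws_nth_0[OF p] by simp
  moreover have "t < length p" "0 < length p" using p assms by (auto simp: saws_def)
  ultimately show False using p \<open>0 < t\<close> by (auto simp: saws_def nth_eq_iff_index_eq)
qed

lemma finite_saws: "finite V \<Longrightarrow> finite (saws V adj s n)"
  by (rule finite_subset[of _ "{p. set p \<subseteq> V \<and> length p = Suc n}"])
     (auto simp: saws_def intro: finite_lists_length_eq)

lemma saws_eq_empty_if_card_le: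
  assumes "finite V" "card V \<le> n"
  shows "saws V adj s n = {}"
proof (rule ccontr)
  assume "saws V adj s n \<noteq> {}"
  then obtain p where p: "p \<in> saws V adj s n" by blast
  then have "card (set p) = Suc n" by (simp add: saws_def distinct_card)
  moreover have "card (set p) \<le> card V" using p assms(1) by (intro card_mono) (auto simp: saws_def)
  ultimately show False using assms(2) by simp
qed

lemma saw_count_eq_0_if_card_le: "finite V \<Longrightarrow> card V \<le> n \<Longrightarrow> saw_count V adj s n = 0"
  by (simp add: saw_count_eq_card saws_eq_empty_if_card_le)

lemma saw_count_1_pos:
  assumes "finite V" "s \<in> V" "x \<noteq> s" "adj\<^sup>*\<^sup>* s x"
    and "\<And>x y. adj x y \<Longrightarrow> y \<in> V" "\<And>x. \<not> adj x x"
  shows "0 < saw_count V adj s 1"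
proof -
  obtain y where y: "adj s y" using assms(3,4) by (metis converse_rtranclpE)
  then have "[s, y] \<in> saws V adj s 1" using assms(2,5,6) by (auto simp: saws_def)
  then show ?thesis using finite_saws[OF assms(1)] by (auto simp: saw_count_eq_card card_gt_0_iff)
qed

section \<open>Growth rates from exponential bounds\<close>

lemma eventually_less_root_of_lower_bound:
  fixes s :: "nat \<Rightarrow> real"
  assumes c: "0 < c" and b: "0 \<le> b" "a < b" and bound: "\<And>n. 1 \<le> n \<Longrightarrow> c * b ^ n \<le> s n"
  shows "eventually (\<lambda>n. a < root n (s n)) sequentially"
proof -
  have "(\<lambda>n. root n c * b) \<longlonglongrightarrow> 1 * b"
    by (intro tendsto_mult LIMSEQ_root_const c tendsto_const)
  then have ev: "eventually (\<lambda>n. a < root n c * b) sequentially"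
    using b by (intro order_tendstoD(1)) auto
  have le: "root n c * b \<le> root n (s n)" if "1 \<le> n" for n
  proof -
    have "root n c * b = root n (c * b ^ n)"
      using that b by (simp add: real_root_mult real_root_power_cancel)
    also have "\<dots> \<le> root n (s n)" using bound[OF that] that by simp
    finally show ?thesis .
  qed
  show ?thesis
    using ev eventually_ge_at_top[of 1] by eventually_elim (use le in fastforce)
qed

lemma eventually_root_less_of_upper_bound:
  fixes s :: "nat \<Rightarrow> real"
  assumes S: "0 < S" and b: "0 \<le> b" "b < a" and bound: "\<And>n. 1 \<le> n \<Longrightarrow> s n \<le> S * b ^ n"
  shows "eventually (\<lambda>n. root n (s n) < a) sequentially"
proof -
  have "(\<lambda>n. root n S * b) \<longlonglongrightarrow> 1 * b"
    by (intro tendsto_mult LIMSEQ_root_const S tendsto_const)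
  then have ev: "eventually (\<lambda>n. root n S * b < a) sequentially"
    using b by (intro order_tendstoD(2)) auto
  have le: "root n (s n) \<le> root n S * b" if "1 \<le> n" for n
  proof -
    have "root n (s n) \<le> root n (S * b ^ n)" using bound[OF that] that by simp
    also have "\<dots> = root n S * b"
      using that b by (simp add: real_root_mult real_root_power_cancel)
    finally show ?thesis .
  qed
  show ?thesis
    using ev eventually_ge_at_top[of 1] by eventually_elim (use le in fastforce)
qed

lemma root_tendsto_of_exponential_bounds:
  fixes s :: "nat \<Rightarrow> real"
  assumes z0: "0 < z0" and c: "0 < c" and lower: "\<And>n. 1 \<le> n \<Longrightarrow> c * (1/z0) ^ n \<le> s n"
    and upper: "\<And>z. 0 < z \<Longrightarrow> z < z0 \<Longrightarrow> \<exists>S>0. \<forall>n\<ge>1. s n \<le> S * (1/z) ^ n"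
  shows "(\<lambda>n. root n (s n)) \<longlonglongrightarrow> 1/z0"
proof (rule order_tendstoI)
  fix a assume "a < 1/z0"
  then show "eventually (\<lambda>n. a < root n (s n)) sequentially"
    using z0 by (intro eventually_less_root_of_lower_bound[OF c _ _ lower]) auto
next
  fix a assume a: "1/z0 < a"
  moreover have "0 < 1/z0" using z0 by simp
  ultimately have "0 < a" by linarith
  define z where "z = (z0 + 1/a) / 2"
  have z: "0 < z" "z < z0" "1/z < a"
    using a z0 \<open>0 < a\<close> by (auto simp: z_def field_simps)
  then obtain S where "0 < S" "\<And>n. 1 \<le> n \<Longrightarrow> s n \<le> S * (1/z) ^ n" using upper by blast
  then show "eventually (\<lambda>n. root n (s n) < a) sequentially"
    using z by (intro eventually_root_less_of_upper_bound) auto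
qed

definition int_coeffs :: "'a::comm_ring_1 poly \<Rightarrow> bool" where
  "int_coeffs p \<longleftrightarrow> (\<forall>n. coeff p n \<in> \<int>)"

lemma int_coeffs_of_int_poly: "int_coeffs (map_poly of_int p)"
  by (simp add: int_coeffs_def coeff_map_poly)

lemma int_coeffs_0: "int_coeffs 0"
  by (simp add: int_coeffs_def)

lemma int_coeffs_1: "int_coeffs 1"
  by (simp add: int_coeffs_def coeff_1)

lemma int_coeffs_add: "int_coeffs p \<Longrightarrow> int_coeffs q \<Longrightarrow> int_coeffs (p + q)"
  by (simp add: int_coeffs_def)

lemma int_coeffs_diff: "int_coeffs p \<Longrightarrow> int_coeffs q \<Longrightarrow> int_coeffs (p - q)"
  by (simp add: int_coeffs_def)

lemma int_coeffs_mult: "int_coeffs p \<Longrightarrow> int_coeffs q \<Longrightarrow> int_coeffs (p * q)"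
  unfolding int_coeffs_def coeff_mult by (intro allI Ints_sum Ints_mult) auto

lemma int_coeffs_sum: "(\<And>i. i \<in> A \<Longrightarrow> int_coeffs (f i)) \<Longrightarrow> int_coeffs (\<Sum>i\<in>A. f i)"
  by (induction A rule: infinite_finite_induct) (auto simp: int_coeffs_0 int_coeffs_add)

lemma int_coeffs_prod: "(\<And>i. i \<in> A \<Longrightarrow> int_coeffs (f i)) \<Longrightarrow> int_coeffs (\<Prod>i\<in>A. f i)"
  by (induction A rule: infinite_finite_induct) (auto simp: int_coeffs_1 int_coeffs_mult)

section \<open>The free product\<close>

locale free_product =
  fixes V :: "nat \<Rightarrow> 'a set" and E :: "nat \<Rightarrow> 'a \<Rightarrow> 'a \<Rightarrow> bool" and rt :: "nat \<Rightarrow> 'a" and r :: nat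
  assumes r_ge_2: "r \<ge> 2"
    and finite_V: "\<And>i. i < r \<Longrightarrow> finite (V i)"
    and card_V_ge_2: "\<And>i. i < r \<Longrightarrow> card (V i) \<ge> 2"
    and root_in_V: "\<And>i. i < r \<Longrightarrow> rt i \<in> V i"
    and edges_in_V: "\<And>i x y. i < r \<Longrightarrow> E i x y \<Longrightarrow> x \<in> V i \<and> y \<in> V i"
    and irrefl: "\<And>i x. i < r \<Longrightarrow> \<not> E i x x"
    and connected: "\<And>i x. i < r \<Longrightarrow> x \<in> V i \<Longrightarrow> (E i)\<^sup>*\<^sup>* (rt i) x"
begin

abbreviation "GV \<equiv> fp_vertices V rt r"
abbreviation "GE \<equiv> fp_adj V E rt r"
abbreviation "emb \<equiv> fp_emb rt"

lemma factors_nonempty: "{..<r} \<noteq> {}"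
  using r_ge_2 by (simp add: lessThan_empty_iff)

lemma emb_in_GV: "i < r \<Longrightarrow> x \<in> V i \<Longrightarrow> emb i x \<in> GV"
  by (auto simp: fp_emb_def fp_vertices_def)

lemma emb_eq_imp_eq: "emb i x = emb i y \<Longrightarrow> x = y"
  by (auto simp: fp_emb_def split: if_splits)

lemma length_emb_le: "length (emb i x) \<le> 1"
  by (simp add: fp_emb_def)

lemma emb_root [simp]: "emb i (rt i) = []"
  by (simp add: fp_emb_def)

lemma emb_nonroot: "x \<noteq> rt i \<Longrightarrow> emb i x = [(i, x)]"
  by (simp add: fp_emb_def)

lemma Nil_in_GV[simp]: "[] \<in> GV"
  by (simp add: fp_vertices_def)

lemma GE_emb: "i < r \<Longrightarrow> E i x y \<Longrightarrow> GE (emb i x) (emb i y)"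
  unfolding fp_adj_def using edges_in_V
  by (intro exI[of _ "[]"] exI[of _ i] exI[of _ x] exI[of _ y]) auto

lemma GV_tl: "b # w \<in> GV \<Longrightarrow> w \<in> GV"
  unfolding fp_vertices_def by fastforce

lemma GV_Cons:
  assumes "w \<in> GV" "fst b < r" "snd b \<in> V (fst b)" "snd b \<noteq> rt (fst b)"
    and "w = [] \<or> fst (hd w) \<noteq> fst b"
  shows "b # w \<in> GV"
proof -
  have "\<forall>j. Suc j < length (b # w) \<longrightarrow> fst ((b # w) ! j) \<noteq> fst ((b # w) ! Suc j)"
  proof (intro allI impI)
    fix j assume j: "Suc j < length (b # w)"
    show "fst ((b # w) ! j) \<noteq> fst ((b # w) ! Suc j)"
    proof (cases j)
      case 0 then show ?thesis using assms(5) j by (auto simp: hd_conv_nth)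
    next
      case (Suc j') then show ?thesis using assms(1) j by (auto simp: fp_vertices_def)
    qed
  qed
  then show ?thesis using assms by (cases b) (auto simp: fp_vertices_def)
qed

lemma GE_E:
  assumes "GE w w'"
  obtains u l x y where "l < r" "u \<in> GV" "u = [] \<or> fst (last u) \<noteq> l" "x \<in> V l" "y \<in> V l"
    "E l x y" "w = u @ emb l x" "w' = u @ emb l y"
  using assms unfolding fp_adj_def by blast

lemma length_GE_le: "GE w w' \<Longrightarrow> length w' \<le> Suc (length w)"
proof (erule GE_E)
  fix u l x y assume "w = u @ emb l x" "w' = u @ emb l y"
  moreover have "length (emb l y) \<le> 1" by (rule length_emb_le)
  ultimately show "length w' \<le> Suc (length w)" by simp
qed

lemma GE_same_first_type: "GE w w' \<Longrightarrow> w \<noteq> [] \<Longrightarrow> w' \<noteq> [] \<Longrightarrow> fst (hd w) = fst (hd w')"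
  by (erule GE_E) (auto simp: fp_emb_def hd_append split: if_splits)

lemma GE_from_root:
  assumes "GE [] w"
  shows "\<exists>j<r. \<exists>y\<in>V j. y \<noteq> rt j \<and> E j (rt j) y \<and> w = [(j, y)]"
  using assms
proof (rule GE_E)
  fix u l x y assume *: "l < r" "x \<in> V l" "y \<in> V l" "E l x y" "[] = u @ emb l x" "w = u @ emb l y"
  have u: "u = []" using *(5) by simp
  have x: "x = rt l" using *(5) by (simp add: fp_emb_def split: if_splits)
  have y: "y \<noteq> rt l" using irrefl[OF *(1)] *(4) x by metis
  have "w = [(l, y)]" using *(6) u y by (simp add: fp_emb_def)
  then show ?thesis using * x y by blast
qed

lemma GE_from_letter:
  assumes "GE [(i, a)] w"
  shows "(\<exists>b\<in>V i. E i a b \<and> w = emb i b)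
       \<or> (\<exists>j y. j < r \<and> j \<noteq> i \<and> y \<in> V j \<and> y \<noteq> rt j \<and> E j (rt j) y \<and> w = [(i, a), (j, y)])"
  using assms
proof (rule GE_E)
  fix u l x y assume *: "l < r" "u = [] \<or> fst (last u) \<noteq> l" "x \<in> V l" "y \<in> V l" "E l x y"
     "[(i, a)] = u @ emb l x" "w = u @ emb l y"
  show ?thesis
  proof (cases u)
    case Nil
    then have e: "emb l x = [(i, a)]" using *(6) by simp
    have "x \<noteq> rt l" using e by (simp add: fp_emb_def split: if_splits)
    then have "l = i" "x = a" using e by (simp_all add: fp_emb_def)
    then have "y \<in> V i \<and> E i a y \<and> w = emb i y" using *(4,5,7) Nil by simp
    then show ?thesis by blast
  next
    case (Cons c u')
    have "length u + length (emb l x) = 1" using arg_cong[OF *(6), of length] by simp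
    then have "emb l x = []" using Cons by simp
    then have u: "u = [(i, a)]" using *(6) by simp
    have x: "x = rt l" using \<open>emb l x = []\<close> by (simp add: fp_emb_def split: if_splits)
    have li: "l \<noteq> i" using *(2) u by simp
    have y: "y \<noteq> rt l" using irrefl[OF *(1)] *(5) x by metis
    have "w = [(i, a), (l, y)]" using *(7) u y by (simp add: fp_emb_def)
    then show ?thesis using *(1,4,5) x y li by blast
  qed
qed

lemma GE_Cons_left:
  assumes "GE (b # w0) w" "w0 \<noteq> []"
  shows "\<exists>w1. w = b # w1 \<and> GE w0 w1"
  using assms(1)
proof (rule GE_E)
  fix u l x y assume *: "l < r" "u \<in> GV" "u = [] \<or> fst (last u) \<noteq> l" "x \<in> V l" "y \<in> V l" "E l x y"
     "b # w0 = u @ emb l x" "w = u @ emb l y"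
  have "u \<noteq> []"
  proof
    assume "u = []"
    then have "length (b # w0) \<le> 1" using *(7) length_emb_le by simp
    then show False using assms(2) by simp
  qed
  then obtain u0 where u: "u = b # u0" using *(7) by (cases u) auto
  then have w0: "w0 = u0 @ emb l x" using *(7) by simp
  have "u0 \<in> GV" using *(2) u GV_tl by blast
  moreover have "u0 = [] \<or> fst (last u0) \<noteq> l" using *(3) u by auto
  ultimately have "GE w0 (u0 @ emb l y)" unfolding fp_adj_def using * w0 by blast
  then show ?thesis using *(8) u by auto
qed

lemma GE_Cons:
  assumes "GE w w'" "w \<noteq> []" "w' \<noteq> []" "fst (hd w) \<noteq> fst b"
    and b: "fst b < r" "snd b \<in> V (fst b)" "snd b \<noteq> rt (fst b)"
  shows "GE (b # w) (b # w')"
  using assms(1)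
proof (rule GE_E)
  fix u l x y assume *: "l < r" "u \<in> GV" "u = [] \<or> fst (last u) \<noteq> l" "x \<in> V l" "y \<in> V l" "E l x y"
     "w = u @ emb l x" "w' = u @ emb l y"
  show ?thesis
  proof (cases u)
    case Nil
    then have "emb l x \<noteq> []" using *(7) assms(2) by simp
    then have "x \<noteq> rt l" by auto
    then have "l \<noteq> fst b" using *(7) Nil assms(4) by (simp add: fp_emb_def)
    then have "[b] \<in> GV" "fst (last [b]) \<noteq> l" using GV_Cons[OF Nil_in_GV b] by auto
    then show ?thesis unfolding fp_adj_def using * Nil by (intro exI[of _ "[b]"] exI[of _ l] exI[of _ x] exI[of _ y]) auto
  next
    case (Cons c u')
    then have "fst (hd u) \<noteq> fst b" using *(7) assms(4) by simp
    then have "b # u \<in> GV" using GV_Cons[OF *(2) b] by auto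
    moreover have "fst (last (b # u)) \<noteq> l" using *(3) Cons by auto
    ultimately show ?thesis unfolding fp_adj_def using * by (intro exI[of _ "b # u"] exI[of _ l] exI[of _ x] exI[of _ y]) auto
  qed
qed

lemma GE_letter_child:
  assumes "i < r" "a \<in> V i" "a \<noteq> rt i" "j < r" "j \<noteq> i" "y \<in> V j" "E j (rt j) y"
  shows "GE [(i, a)] [(i, a), (j, y)]"
proof -
  have "y \<noteq> rt j" using irrefl[OF assms(4)] assms(7) by metis
  moreover have "[(i, a)] \<in> GV" using emb_in_GV[OF assms(1,2)] assms(3) by (simp add: emb_nonroot)
  ultimately show ?thesis
    unfolding fp_adj_def using assms root_in_V[OF assms(4)]
    by (intro exI[of _ "[(i, a)]"] exI[of _ j] exI[of _ "rt j"] exI[of _ y]) (simp add: emb_nonroot)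
qed

abbreviation "Gsaws n \<equiv> saws GV GE [] n"
abbreviation "factor_saws i k \<equiv> saws (V i) (E i) (rt i) k"
abbreviation "factor_saw i k \<equiv> saw_count (V i) (E i) (rt i) k"

lemma factor_saws_last:
  assumes i: "i < r" and q: "q \<in> factor_saws i k" and k: "1 \<le> k"
  shows "last q \<in> V i" "last q \<noteq> rt i"
proof -
  have l: "length q = Suc k" using sawsD(1)[OF q] .
  then have "last q \<in> set q" by (intro last_in_set) auto
  then show "last q \<in> V i" using sawsD(4)[OF q] by auto
  have "last q = q ! k" using l by (cases q rule: rev_cases) (auto simp: nth_append)
  then show "last q \<noteq> rt i" using saws_nth_neq_start[OF q, of k] k by simp
qed

lemma factor_saw_1_pos:
  assumes i: "i < r"
  shows "0 < factor_saw i 1"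
proof -
  have "\<not> V i \<subseteq> {rt i}"
  proof
    assume "V i \<subseteq> {rt i}"
    then have "card (V i) \<le> card {rt i}" by (intro card_mono) auto
    then have "card (V i) \<le> 1" by simp
    then show False using card_V_ge_2[OF i] by simp
  qed
  then obtain x where x: "x \<in> V i" "x \<noteq> rt i" by blast
  show ?thesis
  proof (rule saw_count_1_pos[OF finite_V[OF i] root_in_V[OF i] x(2) connected[OF i x(1)]])
    show "\<And>x y. E i x y \<Longrightarrow> y \<in> V i" using edges_in_V[OF i] by blast
    show "\<And>x. \<not> E i x x" using irrefl[OF i] .
  qed
qed

lemma Gsaws_nth_neq_Nil: "p \<in> Gsaws n \<Longrightarrow> 1 \<le> t \<Longrightarrow> t \<le> n \<Longrightarrow> p ! t \<noteq> []"
  using saws_nth_neq_start[of p GV GE "[]" n t] by simp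

lemma Gsaws_nth_type:
  assumes p: "p \<in> Gsaws n"
  shows "1 \<le> t \<Longrightarrow> t \<le> n \<Longrightarrow> fst (hd (p ! t)) = fst (hd (p ! 1))"
proof (induction t)
  case 0 then show ?case by simp
next
  case (Suc t)
  show ?case
  proof (cases "t = 0")
    case True then show ?thesis by simp
  next
    case False
    have "GE (p ! t) (p ! Suc t)" using sawsD(5)[OF p] Suc.prems by simp
    moreover have "p ! t \<noteq> []" "p ! Suc t \<noteq> []"
      using Gsaws_nth_neq_Nil[OF p] Suc.prems False by auto
    ultimately have "fst (hd (p ! t)) = fst (hd (p ! Suc t))" by (rule GE_same_first_type)
    then show ?thesis using Suc.IH Suc.prems False by simp
  qed
qed

lemma Gsaws_tl:
  assumes p: "p \<in> Gsaws n" and w: "w \<in> set (tl p)"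
  shows "w \<noteq> [] \<and> fst (hd w) = fst (hd (p ! 1))"
proof -
  obtain t where t: "t < length (tl p)" "w = tl p ! t" using w by (metis in_set_conv_nth)
  have l: "length p = Suc n" using sawsD(1)[OF p] .
  then have "tl p ! t = p ! Suc t" by (cases p) auto
  then have "w = p ! Suc t" "Suc t \<le> n" using t l by auto
  then show ?thesis using Gsaws_nth_neq_Nil[OF p] Gsaws_nth_type[OF p] by (metis le_add1 plus_1_eq_Suc)
qed

lemma Gsaws_first_step:
  assumes p: "p \<in> Gsaws n" and n: "1 \<le> n"
  shows "\<exists>j<r. \<exists>y\<in>V j. y \<noteq> rt j \<and> E j (rt j) y \<and> p ! 1 = [(j, y)]"
proof -
  have "GE (p ! 0) (p ! 1)" using sawsD(5)[OF p, of 0] n by simp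
  then have "GE [] (p ! 1)" using saws_nth_0[OF p] by simp
  then show ?thesis by (rule GE_from_root)
qed

lemma length_Gsaws_nth_le:
  assumes p: "p \<in> Gsaws n"
  shows "t \<le> n \<Longrightarrow> length (p ! t) \<le> t"
proof (induction t)
  case 0 then show ?case using saws_nth_0[OF p] by simp
next
  case (Suc t)
  then have "GE (p ! t) (p ! Suc t)" using sawsD(5)[OF p] by simp
  then have "length (p ! Suc t) \<le> Suc (length (p ! t))" by (rule length_GE_le)
  then show ?case using Suc by simp
qed

lemma finite_Gsaws: "finite (Gsaws n)"
proof -
  define L where "L = Sigma {..<r} V"
  have "finite L" unfolding L_def using finite_V by (intro finite_SigmaI) auto
  then have fin_words: "finite {w. set w \<subseteq> L \<and> length w \<le> n}" by (rule finite_lists_length_le)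
  have "w \<in> {w. set w \<subseteq> L \<and> length w \<le> n}" if p: "p \<in> Gsaws n" and w: "w \<in> set p" for p w
  proof -
    obtain t where t: "t < length p" "w = p ! t" using w by (metis in_set_conv_nth)
    then have "length w \<le> n" using length_Gsaws_nth_le[OF p, of t] sawsD(1)[OF p] by simp
    moreover have "w \<in> GV" using sawsD(4)[OF p] w by auto
    then have "set w \<subseteq> L" unfolding L_def fp_vertices_def by auto
    ultimately show ?thesis by simp
  qed
  then have "Gsaws n \<subseteq> {p. set p \<subseteq> {w. set w \<subseteq> L \<and> length w \<le> n} \<and> length p = Suc n}"
    using sawsD(1) by fast
  moreover have "finite {p. set p \<subseteq> {w. set w \<subseteq> L \<and> length w \<le> n} \<and> length p = Suc n}"
    using fin_words by (rule finite_lists_length_eq)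
  ultimately show ?thesis by (rule finite_subset)
qed

definition branch_saws :: "nat \<Rightarrow> nat \<Rightarrow> (nat \<times> 'a) list list set" where
  "branch_saws j n = {p \<in> Gsaws n. 1 \<le> n \<and> fst (hd (p ! 1)) = j}"

definition branch_count :: "nat \<Rightarrow> nat \<Rightarrow> nat" where
  "branch_count j n = card (branch_saws j n)"

lemma branch_sawsD: "p \<in> branch_saws j n \<Longrightarrow> p \<in> Gsaws n \<and> 1 \<le> n \<and> fst (hd (p ! 1)) = j"
  by (simp add: branch_saws_def)

lemma branch_sawsI: "p \<in> Gsaws n \<Longrightarrow> 1 \<le> n \<Longrightarrow> fst (hd (p ! 1)) = j \<Longrightarrow> p \<in> branch_saws j n"
  by (simp add: branch_saws_def)

lemma finite_branch_saws: "finite (branch_saws j n)"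
  using finite_Gsaws by (rule rev_finite_subset) (auto simp: branch_saws_def)

lemma branch_saws_disjoint: "j \<noteq> j' \<Longrightarrow> branch_saws j n \<inter> branch_saws j' n = {}"
  by (auto simp: branch_saws_def)

lemma branch_count_0: "branch_count i 0 = 0"
  by (simp add: branch_count_def branch_saws_def)

lemma fp_saw_eq_sum_branch_count:
  assumes n: "1 \<le> n"
  shows "fp_saw V E rt r n = (\<Sum>j<r. branch_count j n)"
proof -
  have "Gsaws n = (\<Union>j<r. branch_saws j n)"
  proof
    show "Gsaws n \<subseteq> (\<Union>j<r. branch_saws j n)"
    proof
      fix p assume p: "p \<in> Gsaws n"
      obtain j y where "j < r" "p ! 1 = [(j, y)]" using Gsaws_first_step[OF p n] by blast
      then have "p \<in> branch_saws j n" using p n by (intro branch_sawsI) auto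
      then show "p \<in> (\<Union>j<r. branch_saws j n)" using \<open>j < r\<close> by blast
    qed
  qed (auto simp: branch_saws_def)
  moreover have "card (\<Union>j<r. branch_saws j n) = (\<Sum>j<r. card (branch_saws j n))"
    by (intro card_UN_disjoint) (auto simp: finite_branch_saws branch_saws_disjoint)
  ultimately show ?thesis by (simp add: fp_saw_def saw_count_eq_card branch_count_def)
qed

section \<open>Decomposition along the first factor\<close>

lemma branch_saws_Suc_iff:
  assumes n: "1 \<le> n"
  shows "p \<in> branch_saws i (Suc n) \<longleftrightarrow>
    (\<exists>p0 w. p = p0 @ [w] \<and> p0 \<in> branch_saws i n \<and> GE (last p0) w \<and> w \<notin> set p0 \<and> w \<in> GV)"
proof -
  have "(p0 @ [w]) ! 1 = p0 ! 1" if "p0 \<in> Gsaws n" for p0 w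
    using sawsD(1)[OF that] n by (simp add: nth_append)
  then show ?thesis
    using n unfolding branch_saws_def mem_Collect_eq saws_Suc_iff[of p] by fastforce
qed

lemma branch_saws_snoc:
  assumes "P \<in> branch_saws i n" "GE (last P) w" "w \<notin> set P" "w \<in> GV"
  shows "P @ [w] \<in> branch_saws i (Suc n)"
  using assms branch_saws_Suc_iff[of n] branch_sawsD[OF assms(1)] by blast

lemma branch_saws_1_iff:
  "p \<in> branch_saws j (Suc 0) \<longleftrightarrow> (\<exists>y. j < r \<and> y \<in> V j \<and> y \<noteq> rt j \<and> E j (rt j) y \<and> p = [[], [(j, y)]])"
proof
  assume p: "p \<in> branch_saws j (Suc 0)"
  then obtain p0 w where pe: "p = p0 @ [w]" and p0: "p0 \<in> Gsaws 0" and "GE (last p0) w"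
    using saws_Suc_iff[of p GV GE "[]" 0] branch_sawsD[OF p] by blast
  moreover have "p0 = [[]]" using p0 by (simp add: saws_0_iff)
  ultimately obtain j' y where "j' < r" "y \<in> V j'" "y \<noteq> rt j'" "E j' (rt j') y" "p = [[], [(j', y)]]"
    using GE_from_root[of w] pe by auto
  moreover have "j' = j" using branch_sawsD[OF p] \<open>p = [[], [(j', y)]]\<close> by simp
  ultimately show "\<exists>y. j < r \<and> y \<in> V j \<and> y \<noteq> rt j \<and> E j (rt j) y \<and> p = [[], [(j, y)]]" by blast
next
  assume "\<exists>y. j < r \<and> y \<in> V j \<and> y \<noteq> rt j \<and> E j (rt j) y \<and> p = [[], [(j, y)]]"
  then obtain y where y: "j < r" "y \<in> V j" "y \<noteq> rt j" "E j (rt j) y" and p: "p = [[], [(j, y)]]" by blast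
  have "GE [] [(j, y)]" using GE_emb[OF y(1,4)] y(3) by (simp add: emb_nonroot)
  moreover have "[(j, y)] \<in> GV" using emb_in_GV[OF y(1,2)] y(3) by (simp add: emb_nonroot)
  ultimately have "[[], [(j, y)]] \<in> Gsaws 1"
    using saws_Suc_iff[of "[[], [(j, y)]]" GV GE "[]" 0] by (simp add: saws_0_iff)
  then show "p \<in> branch_saws j (Suc 0)" using p by (intro branch_sawsI) auto
qed

text \<open>A walk in the branch of type \<open>i\<close> is a walk \<open>q\<close> in \<open>G\<^sub>i\<close> from its root, followed by a walk
  \<open>p\<close> in the copy of \<open>G\<close> attached at the endpoint \<open>a\<close> of \<open>q\<close>; the latter starts at the root, so
  only its tail contributes, as words prefixed by the letter \<open>a\<close>.\<close>

definition graft :: "nat \<Rightarrow> 'a list \<Rightarrow> (nat \<times> 'a) list list \<Rightarrow> (nat \<times> 'a) list list" where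
  "graft i q p = map (emb i) q @ map (Cons (i, last q)) (tl p)"

lemma graft_Nil: "graft i q [[]] = map (emb i) q"
  by (simp add: graft_def)

lemma graft_snoc: "p \<noteq> [] \<Longrightarrow> graft i q (p @ [w]) = graft i q p @ [(i, last q) # w]"
  by (cases p) (simp_all add: graft_def)

lemma set_graft: "set (graft i q p) = set (map (emb i) q) \<union> Cons (i, last q) ` set (tl p)"
  by (simp add: graft_def)

lemma length_le_1_if_in_map_emb: "x \<in> set (map (emb i) q) \<Longrightarrow> length x \<le> 1"
  using length_emb_le by auto

lemma last_map_emb: "q \<noteq> [] \<Longrightarrow> last q \<noteq> rt i \<Longrightarrow> last (map (emb i) q) = [(i, last q)]"
  by (simp add: last_map emb_nonroot)

lemma map_emb_in_branch_saws:
  assumes i: "i < r" and k: "1 \<le> k"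
  shows "q \<in> factor_saws i k \<Longrightarrow> map (emb i) q \<in> branch_saws i k"
  using k
proof (induction k arbitrary: q rule: nat_induct_at_least)
  case base
  then obtain y where "q = [rt i, y]" "E i (rt i) y" "y \<in> V i"
    using saws_Suc_iff[of q "V i" "E i" "rt i" 0] root_in_V[OF i] by (auto simp: saws_0_iff)
  moreover have "y \<noteq> rt i" using irrefl[OF i] \<open>E i (rt i) y\<close> by metis
  ultimately show ?case using i by (simp add: branch_saws_1_iff emb_nonroot)
next
  case (Suc k)
  obtain q0 b where q: "q = q0 @ [b]" and q0: "q0 \<in> factor_saws i k" and e: "E i (last q0) b"
    and b: "b \<notin> set q0" "b \<in> V i" using saws_Suc_iff[THEN iffD1, OF Suc.prems] by blast
  have "q0 \<noteq> []" using sawsD(1)[OF q0] by auto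
  then have "GE (last (map (emb i) q0)) (emb i b)" using GE_emb[OF i e] by (simp add: last_map)
  moreover have "emb i b \<notin> set (map (emb i) q0)" using b(1) emb_eq_imp_eq by auto
  ultimately have "map (emb i) q0 @ [emb i b] \<in> branch_saws i (Suc k)"
    using branch_saws_snoc[OF Suc.IH[OF q0]] emb_in_GV[OF i b(2)] by blast
  then show ?case using q by simp
qed

lemma graft_new_branch_in_branch_saws:
  assumes i: "i < r" and q: "q \<in> factor_saws i k" and k: "1 \<le> k" and j: "j < r" "j \<noteq> i"
    and p: "p \<in> branch_saws j (Suc 0)"
  shows "graft i q p \<in> branch_saws i (Suc k)"
proof -
  obtain y where y: "y \<in> V j" "y \<noteq> rt j" "E j (rt j) y" and pe: "p = [[], [(j, y)]]"
    using branch_saws_1_iff[THEN iffD1, OF p] by blast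
  define a where "a = last q"
  have a: "a \<in> V i" "a \<noteq> rt i" using factor_saws_last[OF i q k] a_def by auto
  have "q \<noteq> []" using sawsD(1)[OF q] by auto
  then have "last (map (emb i) q) = [(i, a)]" using last_map_emb a a_def by simp
  then have "GE (last (map (emb i) q)) [(i, a), (j, y)]" using GE_letter_child[OF i a j y(1,3)] by simp
  moreover have "[(i, a), (j, y)] \<notin> set (map (emb i) q)"
    using length_le_1_if_in_map_emb[of "[(i, a), (j, y)]" i q] by auto
  moreover have "[(i, a), (j, y)] \<in> GV"
    using GV_Cons[of "[(j, y)]" "(i, a)"] emb_in_GV[OF j(1) y(1)] y(2) j a i by (simp add: emb_nonroot)
  ultimately have "map (emb i) q @ [[(i, a), (j, y)]] \<in> branch_saws i (Suc k)"
    by (rule branch_saws_snoc[OF map_emb_in_branch_saws[OF i k q]])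
  then show ?thesis by (simp add: graft_def pe a_def)
qed

lemma graft_in_branch_saws:
  assumes i: "i < r" and q: "q \<in> factor_saws i k" and k: "1 \<le> k" and j: "j < r" "j \<noteq> i"
    and m: "1 \<le> m"
  shows "p \<in> branch_saws j m \<Longrightarrow> graft i q p \<in> branch_saws i (k + m)"
  using m
proof (induction m arbitrary: p rule: nat_induct_at_least)
  case base
  then show ?case using graft_new_branch_in_branch_saws[OF i q k j] by simp
next
  case (Suc m)
  obtain p0 w where pe: "p = p0 @ [w]" and p0: "p0 \<in> branch_saws j m" and e: "GE (last p0) w"
    and w: "w \<notin> set p0" "w \<in> GV"
    using Suc.prems branch_saws_Suc_iff[OF Suc.hyps] by blast
  define a where "a = last q"
  have a: "a \<in> V i" "a \<noteq> rt i" using factor_saws_last[OF i q k] a_def by auto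
  have p0G: "p0 \<in> Gsaws m" using branch_sawsD[OF p0] by blast
  have tl_ne: "tl p0 \<noteq> []" using sawsD(1)[OF p0G] Suc.hyps by (cases p0) auto
  have last_p0: "last p0 \<in> set (tl p0)" using tl_ne by (metis last_in_set last_tl)
  have "[] \<in> set p0" using sawsD(1,2)[OF p0G] by (metis hd_in_set list.size(3) nat.distinct(1))
  then have w_ne: "w \<noteq> []" using w by auto
  have "w \<in> set (tl p)" using pe tl_ne by (cases p0) auto
  then have w_type: "fst (hd w) = j" using Gsaws_tl branch_sawsD[OF Suc.prems] by blast
  have "last p0 \<noteq> []" "fst (hd (last p0)) = j" using Gsaws_tl[OF p0G last_p0] branch_sawsD[OF p0] by auto
  then have "GE (last (graft i q p0)) ((i, a) # w)"
    using GE_Cons[OF e _ w_ne] tl_ne a i j by (simp add: graft_def a_def last_map last_tl)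
  moreover have "set (tl p0) \<subseteq> set p0" by (cases p0) auto
  then have "(i, a) # w \<notin> set (graft i q p0)"
    using w(1) w_ne length_le_1_if_in_map_emb[of "(i, a) # w" i q] by (auto simp: set_graft a_def)
  moreover have "(i, a) # w \<in> GV" using GV_Cons[of w "(i, a)"] w(2) w_type j a i by simp
  ultimately have "graft i q p0 @ [(i, a) # w] \<in> branch_saws i (Suc (k + m))"
    by (rule branch_saws_snoc[OF Suc.IH[OF p0]])
  moreover have "p0 \<noteq> []" using tl_ne by auto
  ultimately show ?case using pe graft_snoc a_def by simp
qed

definition continuations :: "nat \<Rightarrow> nat \<Rightarrow> (nat \<times> 'a) list list set" where
  "continuations i m = (if m = 0 then {[[]]} else (\<Union>j\<in>{..<r}-{i}. branch_saws j m))"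

definition graft_pairs :: "nat \<Rightarrow> nat \<Rightarrow> ('a list \<times> (nat \<times> 'a) list list) set" where
  "graft_pairs i n = (\<Union>k\<in>{1..n}. factor_saws i k \<times> continuations i (n - k))"

lemma graft_pairs_in_branch_saws:
  assumes i: "i < r" and "(q, p) \<in> graft_pairs i n"
  shows "graft i q p \<in> branch_saws i n"
proof -
  obtain k where k: "1 \<le> k" "k \<le> n" and q: "q \<in> factor_saws i k" and p: "p \<in> continuations i (n - k)"
    using assms(2) by (auto simp: graft_pairs_def)
  show ?thesis
  proof (cases "k = n")
    case True
    then show ?thesis using p map_emb_in_branch_saws[OF i k(1) q] by (simp add: continuations_def graft_Nil)
  next
    case False
    then obtain j where j: "j < r" "j \<noteq> i" and "p \<in> branch_saws j (n - k)"
      using p k(2) by (auto simp: continuations_def)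
    moreover have "1 \<le> n - k" using k False by simp
    ultimately have "graft i q p \<in> branch_saws i (k + (n - k))"
      by (intro graft_in_branch_saws[OF i q k(1) j])
    then show ?thesis using k(2) by simp
  qed
qed

lemma factor_walk_snoc_decompose:
  assumes i: "i < r" and q: "q \<in> factor_saws i k" and k: "1 \<le> k"
    and e: "GE (last (map (emb i) q)) w" and w: "w \<notin> set (map (emb i) q)"
  shows "\<exists>(q', p) \<in> graft_pairs i (Suc k). map (emb i) q @ [w] = graft i q' p"
proof -
  define a where "a = last q"
  have a: "a \<in> V i" "a \<noteq> rt i" using factor_saws_last[OF i q k] a_def by auto
  have "q \<noteq> []" using sawsD(1)[OF q] by auto
  then have "GE [(i, a)] w" using e last_map_emb a a_def by simp
  then consider (factor) b where "b \<in> V i" "E i a b" "w = emb i b"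
    | (branch) j y where "j < r" "j \<noteq> i" "y \<in> V j" "y \<noteq> rt j" "E j (rt j) y" "w = [(i, a), (j, y)]"
    using GE_from_letter by blast
  then show ?thesis
  proof cases
    case factor
    then have "b \<notin> set q" using w by auto
    then have "q @ [b] \<in> factor_saws i (Suc k)" unfolding saws_Suc_iff using q factor a_def by blast
    then have "(q @ [b], [[]]) \<in> graft_pairs i (Suc k)" by (force simp: graft_pairs_def continuations_def)
    then show ?thesis using factor by (force simp: graft_Nil)
  next
    case branch
    then have "[[], [(j, y)]] \<in> continuations i (Suc k - k)"
      by (auto simp: continuations_def branch_saws_1_iff)
    then have "(q, [[], [(j, y)]]) \<in> graft_pairs i (Suc k)" using q k by (force simp: graft_pairs_def)
    then show ?thesis using branch a_def by (force simp: graft_def)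
  qed
qed

lemma graft_snoc_decompose:
  assumes i: "i < r" and q: "q \<in> factor_saws i k" and k: "1 \<le> k" and p: "p \<in> branch_saws j m"
    and e: "GE (last (graft i q p)) w" and w: "w \<notin> set (graft i q p)" "w \<in> GV"
  shows "\<exists>w'. w = (i, last q) # w' \<and> p @ [w'] \<in> branch_saws j (Suc m)"
proof -
  have pG: "p \<in> Gsaws m" and m: "1 \<le> m" using branch_sawsD[OF p] by auto
  have tl_ne: "tl p \<noteq> []" using sawsD(1)[OF pG] m by (cases p) auto
  have last_p: "last p \<in> set (tl p)" using tl_ne by (metis last_in_set last_tl)
  then have "last p \<noteq> []" using Gsaws_tl[OF pG] by blast
  moreover have "GE ((i, last q) # last p) w"
    using e tl_ne by (simp add: graft_def last_map last_tl)
  ultimately obtain w' where w': "w = (i, last q) # w'" "GE (last p) w'" using GE_Cons_left by blast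
  have "q \<noteq> []" using sawsD(1)[OF q] by auto
  then have "[(i, last q)] \<in> set (graft i q p)"
    using factor_saws_last[OF i q k] last_map_emb[of q i] last_in_set[of "map (emb i) q"]
    by (simp add: graft_def)
  then have "w' \<noteq> []" using w(1) w' by auto
  moreover have "w' \<notin> set (tl p)" using w(1) w' by (auto simp: graft_def)
  moreover have "p = [] # tl p" using sawsD(1,2)[OF pG] by (cases p) auto
  ultimately have "w' \<notin> set p" by (metis set_ConsD)
  moreover have "w' \<in> GV" using w(2) w' GV_tl by blast
  ultimately show ?thesis using w' branch_saws_snoc[OF p] by blast
qed

lemma branch_saws_decompose:
  assumes i: "i < r" and n: "1 \<le> n"
  shows "p \<in> branch_saws i n \<Longrightarrow> \<exists>(q, p') \<in> graft_pairs i n. p = graft i q p'"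
  using n
proof (induction n arbitrary: p rule: nat_induct_at_least)
  case base
  then obtain y where y: "y \<in> V i" "y \<noteq> rt i" "E i (rt i) y" and p: "p = [[], [(i, y)]]"
    using branch_saws_1_iff by auto
  have "[rt i, y] \<in> factor_saws i 1"
    using saws_Suc_iff[of "[rt i, y]" "V i" "E i" "rt i" 0] root_in_V[OF i] y by (simp add: saws_0_iff)
  then have "([rt i, y], [[]]) \<in> graft_pairs i 1" by (force simp: graft_pairs_def continuations_def)
  then show ?case using p y by (force simp: graft_Nil emb_nonroot)
next
  case (Suc n)
  obtain p0 w where pe: "p = p0 @ [w]" and p0: "p0 \<in> branch_saws i n" and e: "GE (last p0) w"
    and w: "w \<notin> set p0" "w \<in> GV"
    using Suc.prems branch_saws_Suc_iff[OF Suc.hyps] by blast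
  obtain q p' k where p0e: "p0 = graft i q p'" and k: "1 \<le> k" "k \<le> n"
    and q: "q \<in> factor_saws i k" and p': "p' \<in> continuations i (n - k)"
    using Suc.IH[OF p0] by (auto simp: graft_pairs_def)
  show ?case
  proof (cases "k = n")
    case True
    then have "p0 = map (emb i) q" using p0e p' by (simp add: continuations_def graft_Nil)
    then show ?thesis using factor_walk_snoc_decompose[OF i q k(1)] e w True pe by simp
  next
    case False
    then obtain j where j: "j < r" "j \<noteq> i" and p'j: "p' \<in> branch_saws j (n - k)"
      using p' k(2) by (auto simp: continuations_def)
    obtain w' where w': "w = (i, last q) # w'" and p'': "p' @ [w'] \<in> branch_saws j (Suc (n - k))"
      using graft_snoc_decompose[OF i q k(1) p'j] e w p0e by blast
    have "p' @ [w'] \<in> continuations i (Suc n - k)"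
      using p'' j k by (auto simp: continuations_def Suc_diff_le)
    then have "(q, p' @ [w']) \<in> graft_pairs i (Suc n)" using q k by (force simp: graft_pairs_def)
    moreover have "length p' = Suc (n - k)" using branch_sawsD[OF p'j] by (intro sawsD(1)) blast
    then have "p' \<noteq> []" by auto
    then have "p = graft i q (p' @ [w'])" using pe p0e w' by (simp add: graft_snoc)
    ultimately show ?thesis by (intro bexI[of _ "(q, p' @ [w'])"]) simp_all
  qed
qed

lemma filter_graft_short:
  "[] \<notin> set ps \<Longrightarrow> filter (\<lambda>x. length x \<le> 1) (map (emb i) q @ map (Cons c) ps) = map (emb i) q"
  using length_emb_le by (auto simp: filter_empty_conv intro: filter_True)

lemma filter_graft_long:
  "[] \<notin> set ps \<Longrightarrow> filter (\<lambda>x. \<not> length x \<le> 1) (map (emb i) q @ map (Cons c) ps) = map (Cons c) ps"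
  using length_emb_le by (induction ps) (auto simp: filter_empty_conv)

lemma graft_inj:
  assumes ps: "[] \<notin> set ps1" "[] \<notin> set ps2" and eq: "graft i q1 ([] # ps1) = graft i q2 ([] # ps2)"
  shows "q1 = q2 \<and> ps1 = ps2"
proof -
  have eq': "map (emb i) q1 @ map (Cons (i, last q1)) ps1 = map (emb i) q2 @ map (Cons (i, last q2)) ps2"
    using eq by (simp add: graft_def)
  have "map (emb i) q1 = map (emb i) q2"
    using arg_cong[OF eq', of "filter (\<lambda>x. length x \<le> 1)"]
    unfolding filter_graft_short[OF ps(1)] filter_graft_short[OF ps(2)] .
  moreover have "inj (emb i)" using emb_eq_imp_eq by (intro injI) auto
  ultimately have q: "q1 = q2" by (simp add: inj_map_eq_map)
  have "map (Cons (i, last q1)) ps1 = map (Cons (i, last q1)) ps2"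
    using arg_cong[OF eq', of "filter (\<lambda>x. \<not> length x \<le> 1)"] q
    unfolding filter_graft_long[OF ps(1)] filter_graft_long[OF ps(2)] by simp
  then show ?thesis using q by (simp add: inj_map_eq_map)
qed

lemma continuations_shape:
  assumes "p \<in> continuations i m"
  shows "\<exists>ps. p = [] # ps \<and> [] \<notin> set ps"
proof (cases "m = 0")
  case True
  then show ?thesis using assms by (simp add: continuations_def)
next
  case False
  then obtain j where "p \<in> branch_saws j m" using assms by (auto simp: continuations_def)
  then have p: "p \<in> Gsaws m" by (simp add: branch_saws_def)
  then have "p = [] # tl p" using sawsD(1,2)[OF p] by (cases p) auto
  moreover have "[] \<notin> set (tl p)" using Gsaws_tl[OF p] by blast
  ultimately show ?thesis by blast
qed

lemma inj_on_graft_pairs: "inj_on (\<lambda>(q, p). graft i q p) (graft_pairs i n)"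
proof (rule inj_onI, clarify)
  fix q1 p1 q2 p2 assume "(q1, p1) \<in> graft_pairs i n" "(q2, p2) \<in> graft_pairs i n"
    and eq: "graft i q1 p1 = graft i q2 p2"
  then obtain k1 k2 where "p1 \<in> continuations i (n - k1)" "p2 \<in> continuations i (n - k2)"
    by (auto simp: graft_pairs_def)
  then obtain ps1 ps2 where "p1 = [] # ps1" "[] \<notin> set ps1" "p2 = [] # ps2" "[] \<notin> set ps2"
    using continuations_shape by metis
  then show "q1 = q2 \<and> p1 = p2" using graft_inj eq by blast
qed

lemma branch_saws_eq_graft_image:
  "i < r \<Longrightarrow> 1 \<le> n \<Longrightarrow> branch_saws i n = (\<lambda>(q, p). graft i q p) ` graft_pairs i n"
  using branch_saws_decompose graft_pairs_in_branch_saws by fast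

lemma finite_continuations: "finite (continuations i m)"
  by (auto simp: continuations_def finite_branch_saws)

lemma card_graft_pairs:
  assumes i: "i < r"
  shows "card (graft_pairs i n) = (\<Sum>k=1..n. factor_saw i k * card (continuations i (n - k)))"
proof -
  have "card (graft_pairs i n) = (\<Sum>k=1..n. card (factor_saws i k \<times> continuations i (n - k)))"
    unfolding graft_pairs_def
  proof (rule card_UN_disjoint)
    show "\<forall>k\<in>{1..n}. finite (factor_saws i k \<times> continuations i (n - k))"
      using finite_saws[OF finite_V[OF i]] finite_continuations by blast
    show "\<forall>k\<in>{1..n}. \<forall>k'\<in>{1..n}. k \<noteq> k' \<longrightarrow>
        (factor_saws i k \<times> continuations i (n - k)) \<inter> (factor_saws i k' \<times> continuations i (n - k')) = {}"
    proof (intro ballI impI equals0I)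
      fix k k' x assume "k \<noteq> k'"
        "x \<in> (factor_saws i k \<times> continuations i (n - k)) \<inter> (factor_saws i k' \<times> continuations i (n - k'))"
      then have "fst x \<in> factor_saws i k" "fst x \<in> factor_saws i k'" by auto
      from sawsD(1)[OF this(1)] sawsD(1)[OF this(2)] show False using \<open>k \<noteq> k'\<close> by simp
    qed
  qed simp
  then show ?thesis by (simp add: card_cartesian_product saw_count_eq_card)
qed

definition continuation_count :: "nat \<Rightarrow> nat \<Rightarrow> nat" where
  "continuation_count i m = (if m = 0 then 1 else (\<Sum>j\<in>{..<r}-{i}. branch_count j m))"

lemma card_continuations: "card (continuations i m) = continuation_count i m"
proof (cases "m = 0")
  case False
  then have "card (\<Union>j\<in>{..<r}-{i}. branch_saws j m) = (\<Sum>j\<in>{..<r}-{i}. card (branch_saws j m))"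
    by (intro card_UN_disjoint) (auto simp: finite_branch_saws branch_saws_disjoint)
  then show ?thesis using False by (simp add: continuations_def continuation_count_def branch_count_def)
qed (simp add: continuations_def continuation_count_def)

theorem branch_count_rec:
  assumes "i < r" "1 \<le> n"
  shows "branch_count i n = (\<Sum>k=1..n. factor_saw i k * continuation_count i (n - k))"
proof -
  have "branch_count i n = card (graft_pairs i n)"
    unfolding branch_count_def branch_saws_eq_graft_image[OF assms]
    by (rule card_image[OF inj_on_graft_pairs])
  then show ?thesis using card_graft_pairs[OF assms(1)] card_continuations by simp
qed

section \<open>Generating functions\<close>

abbreviation "M i \<equiv> Mgf V E rt i"

definition deg_bound :: nat where
  "deg_bound = (\<Sum>i<r. card (V i))"

lemma card_V_le_deg_bound: "i < r \<Longrightarrow> card (V i) \<le> deg_bound"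
  unfolding deg_bound_def by (rule member_le_sum) auto

lemma deg_bound_ge_2: "2 \<le> deg_bound"
  using card_V_le_deg_bound[of 0] card_V_ge_2[of 0] r_ge_2 by simp

lemma Mgf_eq_sum:
  assumes i: "i < r" and N: "card (V i) \<le> Suc N"
  shows "M i z = (\<Sum>k=1..N. real (factor_saw i k) * z ^ k)"
proof -
  have "M i z = (\<Sum>n<N. real (factor_saw i (Suc n)) * z ^ Suc n)"
    unfolding Mgf_def
    by (rule suminf_finite) (use N in \<open>auto simp: saw_count_eq_0_if_card_le[OF finite_V[OF i]]\<close>)
  then show ?thesis by (simp add: sum.atLeast1_atMost_eq)
qed

lemma M_eq_sum: "i < r \<Longrightarrow> M i z = (\<Sum>k=1..deg_bound. real (factor_saw i k) * z ^ k)"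
  using card_V_le_deg_bound by (intro Mgf_eq_sum) (auto intro: le_SucI)

lemma partial_sum_le_M:
  assumes i: "i < r" and z: "0 \<le> z"
  shows "(\<Sum>k=1..n. real (factor_saw i k) * z ^ k) \<le> M i z"
proof -
  have "(\<Sum>k=1..n. real (factor_saw i k) * z ^ k) \<le> (\<Sum>k=1..max n deg_bound. real (factor_saw i k) * z ^ k)"
    using z by (intro sum_mono2) auto
  also have "\<dots> = M i z"
    using card_V_le_deg_bound[OF i] by (intro Mgf_eq_sum[symmetric] i) auto
  finally show ?thesis .
qed

lemma M_nonneg: "i < r \<Longrightarrow> 0 \<le> z \<Longrightarrow> 0 \<le> M i z"
  unfolding M_eq_sum by (intro sum_nonneg) auto

lemma M_0: "i < r \<Longrightarrow> M i 0 = 0"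
  unfolding M_eq_sum by simp

lemma M_strict_mono:
  assumes i: "i < r" and z: "0 \<le> z" "z < w"
  shows "M i z < M i w"
  unfolding M_eq_sum[OF i]
proof (rule sum_strict_mono_ex1)
  show "\<forall>k\<in>{1..deg_bound}. real (factor_saw i k) * z ^ k \<le> real (factor_saw i k) * w ^ k"
    using z by (auto intro!: mult_left_mono power_mono)
  have "1 \<in> {1..deg_bound}" using deg_bound_ge_2 by simp
  moreover have "real (factor_saw i 1) * z ^ 1 < real (factor_saw i 1) * w ^ 1"
    using factor_saw_1_pos[OF i] z by simp
  ultimately show "\<exists>k\<in>{1..deg_bound}. real (factor_saw i k) * z ^ k < real (factor_saw i k) * w ^ k"
    by blast
qed simp

lemma M_pos: "i < r \<Longrightarrow> 0 < z \<Longrightarrow> 0 < M i z"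
  using M_strict_mono[of i 0 z] M_0 by simp

lemma M_1_ge_1: "i < r \<Longrightarrow> 1 \<le> M i 1"
proof -
  assume i: "i < r"
  have "1 \<in> {1..deg_bound}" using deg_bound_ge_2 by simp
  then have "real (factor_saw i 1) * 1 ^ 1 \<le> M i 1"
    unfolding M_eq_sum[OF i] by (intro member_le_sum) auto
  then show ?thesis using factor_saw_1_pos[OF i] by simp
qed

definition frac_sum :: "real \<Rightarrow> real" where
  "frac_sum z = (\<Sum>i<r. M i z / (1 + M i z))"

lemma frac_sum_strict_mono:
  assumes "0 \<le> z" "z < w"
  shows "frac_sum z < frac_sum w"
  unfolding frac_sum_def
proof (rule sum_strict_mono)
  show "{..<r} \<noteq> {}" by (rule factors_nonempty)
  fix i assume "i \<in> {..<r}"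
  then have i: "i < r" by simp
  have "0 \<le> M i z" "M i z < M i w" using M_nonneg[OF i] M_strict_mono[OF i assms] assms by auto
  then show "M i z / (1 + M i z) < M i w / (1 + M i w)"
    by (simp add: divide_simps algebra_simps)
qed simp

lemma frac_sum_0: "frac_sum 0 = 0"
  by (simp add: frac_sum_def M_0)

lemma frac_sum_1_ge_1: "1 \<le> frac_sum 1"
proof -
  have "1/2 \<le> M i 1 / (1 + M i 1)" if "i < r" for i
    using M_1_ge_1[OF that] by (simp add: divide_simps)
  then have "(\<Sum>i<r. (1/2::real)) \<le> frac_sum 1"
    unfolding frac_sum_def by (intro sum_mono) auto
  then show ?thesis using r_ge_2 by simp
qed

lemma continuous_on_frac_sum: "continuous_on {0..1} frac_sum"
proof -
  have "continuous_on {0..1} (M i)" if "i < r" for i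
    unfolding M_eq_sum[OF that, abs_def] by (intro continuous_intros)
  moreover have "1 + M i z \<noteq> 0" if "i < r" "z \<in> {0..1}" for i z
    using M_nonneg[OF that(1), of z] that(2) by auto
  ultimately show ?thesis
    unfolding frac_sum_def by (intro continuous_intros) auto
qed

definition z0 :: real where
  "z0 = (SOME z. 0 < z \<and> z \<le> 1 \<and> frac_sum z = 1)"

lemma z0: "0 < z0" "z0 \<le> 1" "frac_sum z0 = 1"
proof -
  obtain z where z: "0 \<le> z" "z \<le> 1" "frac_sum z = 1"
    using IVT'[of frac_sum 0 1 1] frac_sum_0 frac_sum_1_ge_1 continuous_on_frac_sum by auto
  then have "z \<noteq> 0" using frac_sum_0 by auto
  then have "\<exists>z. 0 < z \<and> z \<le> 1 \<and> frac_sum z = 1" using z by (intro exI[of _ z]) auto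
  then have "0 < z0 \<and> z0 \<le> 1 \<and> frac_sum z0 = 1" unfolding z0_def by (rule someI_ex)
  then show "0 < z0" "z0 \<le> 1" "frac_sum z0 = 1" by auto
qed

lemma frac_sum_less_1: "0 \<le> z \<Longrightarrow> z < z0 \<Longrightarrow> frac_sum z < 1"
  using frac_sum_strict_mono z0(3) by fastforce

lemma Dfun_eq_prod_mult:
  assumes z: "0 \<le> z"
  shows "Dfun V E rt r z = (\<Prod>k<r. 1 + M k z) * (1 - frac_sum z)"
proof -
  have "M i z * (\<Prod>j\<in>{..<r} - {i}. 1 + M j z) = M i z / (1 + M i z) * (\<Prod>k<r. 1 + M k z)"
    if i: "i < r" for i
  proof -
    have "(\<Prod>k<r. 1 + M k z) = (1 + M i z) * (\<Prod>j\<in>{..<r} - {i}. 1 + M j z)"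
      using i by (simp add: prod.remove)
    moreover have "1 + M i z \<noteq> 0" using M_nonneg[OF i z] by simp
    ultimately show ?thesis by simp
  qed
  then have "(\<Sum>i<r. M i z * (\<Prod>j\<in>{..<r} - {i}. 1 + M j z)) = frac_sum z * (\<Prod>k<r. 1 + M k z)"
    unfolding frac_sum_def sum_distrib_right by (intro sum.cong) simp_all
  then show ?thesis unfolding Dfun_def by (simp add: algebra_simps)
qed

lemma Dfun_z0: "Dfun V E rt r z0 = 0"
  using Dfun_eq_prod_mult[of z0] z0 by simp

lemma Dfun_pos: "0 \<le> z \<Longrightarrow> z < z0 \<Longrightarrow> 0 < Dfun V E rt r z"
  unfolding Dfun_eq_prod_mult
  using M_nonneg frac_sum_less_1 by (intro mult_pos_pos prod_pos) (auto simp: add_pos_nonneg)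

section \<open>Exponential bounds\<close>

lemma branch_count_rec_real:
  assumes "i < r" "1 \<le> n"
  shows "real (branch_count i n) = (\<Sum>k=1..n. real (factor_saw i k) * real (continuation_count i (n - k)))"
  using branch_count_rec[OF assms] by simp

lemma continuation_count_real:
  "0 < m \<Longrightarrow> real (continuation_count i m) = (\<Sum>j\<in>{..<r}-{i}. real (branch_count j m))"
  by (simp add: continuation_count_def)

lemma branch_count_pos: "i < r \<Longrightarrow> 1 \<le> n \<Longrightarrow> 1 \<le> branch_count i n"
proof (induction n arbitrary: i)
  case 0 then show ?case by simp
next
  case (Suc m)
  have i: "i < r" using Suc.prems by simp
  have "factor_saw i 1 * continuation_count i (Suc m - 1)
      \<le> (\<Sum>k=1..Suc m. factor_saw i k * continuation_count i (Suc m - k))"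
    by (rule member_le_sum) auto
  also have "\<dots> = branch_count i (Suc m)" using branch_count_rec[OF i] by simp
  finally have le: "factor_saw i 1 * continuation_count i m \<le> branch_count i (Suc m)" by simp
  have "1 \<le> continuation_count i m"
  proof (cases "m = 0")
    case False
    define j where "j = (if i = 0 then 1 else (0::nat))"
    have j: "j \<in> {..<r} - {i}" using r_ge_2 by (auto simp: j_def)
    have "branch_count j m \<le> (\<Sum>j\<in>{..<r}-{i}. branch_count j m)" using j by (intro member_le_sum) auto
    moreover have "1 \<le> branch_count j m" using Suc.IH[of j] j False by simp
    ultimately show ?thesis using False by (simp add: continuation_count_def)
  qed (simp add: continuation_count_def)
  then have "1 \<le> factor_saw i 1 * continuation_count i m"
    using factor_saw_1_pos[OF i] by (simp add: Suc_le_eq)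
  then show ?case using le by (rule order_trans)
qed

lemma power_inverse_diff: "0 < (z::real) \<Longrightarrow> k \<le> n \<Longrightarrow> (1/z) ^ (n - k) = z ^ k * (1/z) ^ n"
  by (simp add: power_diff power_one_over field_simps)

definition branch_weight :: "real \<Rightarrow> nat \<Rightarrow> real" where
  "branch_weight z i = M i z / (1 + M i z) / (1 - frac_sum z)"

lemma branch_weight_nonneg:
  assumes "i < r" "0 \<le> z" "z < z0"
  shows "0 \<le> branch_weight z i"
  unfolding branch_weight_def
  using M_nonneg[OF assms(1,2)] frac_sum_less_1[OF assms(2,3)] by (intro divide_nonneg_nonneg) auto

lemma branch_weight_pos:
  assumes "i < r" "0 < z" "z < z0"
  shows "0 < branch_weight z i"
  unfolding branch_weight_def
  using M_pos[OF assms(1,2)] frac_sum_less_1[of z] assms by (intro divide_pos_pos) auto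

text \<open>The generating functions of the branches satisfy \<open>A\<^sub>i = M\<^sub>i (1 + \<Sum>\<^sub>j\<^sub>\<noteq>\<^sub>i A\<^sub>j)\<close>;
  the branch weights are its solution.\<close>

lemma branch_weight_fixpoint:
  assumes i: "i < r" and z: "0 \<le> z" "z < z0"
  shows "M i z * (1 + (\<Sum>j\<in>{..<r}-{i}. branch_weight z j)) = branch_weight z i"
proof -
  have F1: "1 - frac_sum z \<noteq> 0" using frac_sum_less_1[OF z] by simp
  have d: "1 + M i z \<noteq> 0" using M_nonneg[OF i z(1)] by simp
  have "(\<Sum>j\<in>{..<r}-{i}. branch_weight z j) = (\<Sum>j<r. branch_weight z j) - branch_weight z i"
    using i by (simp add: sum_diff1)
  also have "(\<Sum>j<r. branch_weight z j) = frac_sum z / (1 - frac_sum z)"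
    unfolding branch_weight_def frac_sum_def by (simp add: sum_divide_distrib)
  finally have "1 + (\<Sum>j\<in>{..<r}-{i}. branch_weight z j)
      = 1 + frac_sum z / (1 - frac_sum z) - M i z / (1 + M i z) / (1 - frac_sum z)"
    unfolding branch_weight_def by simp
  also have "\<dots> = 1 / (1 + M i z) / (1 - frac_sum z)"
    using F1 d by (simp add: divide_simps)
  finally show ?thesis unfolding branch_weight_def by simp
qed

lemma branch_count_upper:
  assumes z: "0 < z" "z < z0"
  shows "i < r \<Longrightarrow> real (branch_count i n) \<le> branch_weight z i * (1/z) ^ n"
proof (induction n arbitrary: i rule: less_induct)
  case (less n)
  then have i: "i < r" by simp
  show ?case
  proof (cases "n = 0")
    case True then show ?thesis using branch_count_0 branch_weight_nonneg[OF i] z by simp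
  next
    case False
    then have n: "1 \<le> n" by simp
    define K where "K = 1 + (\<Sum>j\<in>{..<r}-{i}. branch_weight z j)"
    have "0 \<le> (\<Sum>j\<in>{..<r}-{i}. branch_weight z j)" using branch_weight_nonneg z by (intro sum_nonneg) auto
    then have K1: "1 \<le> K" unfolding K_def by simp
    have cont_le: "real (continuation_count i (n - k)) \<le> K * (1/z) ^ (n - k)" if k: "k \<in> {1..n}" for k
    proof (cases "n - k = 0")
      case True then show ?thesis using K1 by (simp add: continuation_count_def)
    next
      case False
      have "real (continuation_count i (n - k)) = (\<Sum>j\<in>{..<r}-{i}. real (branch_count j (n - k)))"
        using False by (simp add: continuation_count_real)
      also have "\<dots> \<le> (\<Sum>j\<in>{..<r}-{i}. branch_weight z j * (1/z) ^ (n - k))"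
        using less.IH[of "n - k"] k False by (intro sum_mono) auto
      also have "\<dots> = (K - 1) * (1/z) ^ (n - k)" unfolding K_def by (simp add: sum_distrib_right)
      also have "\<dots> \<le> K * (1/z) ^ (n - k)" using z by simp
      finally show ?thesis .
    qed
    have "real (branch_count i n) = (\<Sum>k=1..n. real (factor_saw i k) * real (continuation_count i (n - k)))"
      using branch_count_rec_real[OF i n] .
    also have "\<dots> \<le> (\<Sum>k=1..n. real (factor_saw i k) * (K * (1/z) ^ (n - k)))"
      using cont_le by (intro sum_mono mult_left_mono) auto
    also have "\<dots> = (\<Sum>k=1..n. real (factor_saw i k) * z ^ k) * (K * (1/z) ^ n)"
      unfolding sum_distrib_right by (intro sum.cong) (auto simp: power_inverse_diff[OF z(1)])
    also have "\<dots> \<le> M i z * (K * (1/z) ^ n)"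
      using partial_sum_le_M[OF i, of z n] z K1 by (intro mult_right_mono) auto
    also have "\<dots> = branch_weight z i * (1/z) ^ n"
      using branch_weight_fixpoint[OF i] z unfolding K_def by simp
    finally show ?thesis .
  qed
qed

lemma frac_fixpoint_z0:
  assumes i: "i < r"
  shows "M i z0 * (\<Sum>j\<in>{..<r}-{i}. M j z0 / (1 + M j z0)) = M i z0 / (1 + M i z0)"
proof -
  have "(\<Sum>j\<in>{..<r}-{i}. M j z0 / (1 + M j z0)) = 1 - M i z0 / (1 + M i z0)"
    using z0(3) i unfolding frac_sum_def by (simp add: sum_diff1)
  moreover have "1 + M i z0 \<noteq> 0" using M_nonneg[OF i] z0(1) by (simp add: add_nonneg_eq_0_iff)
  ultimately show ?thesis by (simp add: field_simps)
qed

lemma z0_power_le_1: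
  assumes "n \<le> deg_bound"
  shows "z0 ^ deg_bound * (1/z0) ^ n \<le> 1"
proof -
  have "z0 ^ deg_bound * (1/z0) ^ n = z0 ^ (deg_bound - n)"
    using power_inverse_diff[of "1/z0" n deg_bound] assms z0 by simp
  also have "\<dots> \<le> 1" using z0 by (simp add: power_le_one)
  finally show ?thesis .
qed

text \<open>The factor \<open>z0 ^ deg_bound\<close> makes the bound trivial for \<open>n \<le> deg_bound\<close>; beyond that,
  every term of the recursion refers to a shorter walk.\<close>

lemma branch_count_lower:
  "i < r \<Longrightarrow> 1 \<le> n \<Longrightarrow> z0 ^ deg_bound * (M i z0 / (1 + M i z0)) * (1/z0) ^ n \<le> real (branch_count i n)"
proof (induction n arbitrary: i rule: less_induct)
  case (less n)
  then have i: "i < r" and n: "1 \<le> n" by auto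
  define v where "v j = M j z0 / (1 + M j z0)" for j
  have v: "0 \<le> v j" "v j \<le> 1" if "j < r" for j
    unfolding v_def using M_nonneg[OF that, of z0] z0 by (auto simp: divide_simps)
  show ?case
  proof (cases "n \<le> deg_bound")
    case True
    have "v i * (z0 ^ deg_bound * (1/z0) ^ n) \<le> 1"
      using mult_le_one[OF v(2)[OF i] _ z0_power_le_1[OF True]] v(1)[OF i] z0(1) by simp
    then have "z0 ^ deg_bound * v i * (1/z0) ^ n \<le> 1" by (simp add: ac_simps)
    also have "1 \<le> real (branch_count i n)" using branch_count_pos[OF i n] by simp
    finally show ?thesis by (simp add: v_def)
  next
    case False
    have cont_ge: "z0 ^ deg_bound * (\<Sum>j\<in>{..<r}-{i}. v j) * (z0 ^ k * (1/z0) ^ n) \<le> real (continuation_count i (n - k))"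
      if k: "k \<in> {1..deg_bound}" for k
    proof -
      have nk: "0 < n - k" "n - k < n" "1 \<le> n - k" using k False by auto
      have "z0 ^ deg_bound * (\<Sum>j\<in>{..<r}-{i}. v j) * (z0 ^ k * (1/z0) ^ n)
          = (\<Sum>j\<in>{..<r}-{i}. z0 ^ deg_bound * v j * (1/z0) ^ (n - k))"
        using power_inverse_diff[OF z0(1), of k n] nk by (simp add: sum_distrib_left sum_distrib_right)
      also have "\<dots> \<le> (\<Sum>j\<in>{..<r}-{i}. real (branch_count j (n - k)))"
        using less.IH[OF nk(2)] nk(3) unfolding v_def by (intro sum_mono) auto
      also have "\<dots> = real (continuation_count i (n - k))" using nk by (simp add: continuation_count_real)
      finally show ?thesis .
    qed
    have "z0 ^ deg_bound * v i * (1/z0) ^ n = z0 ^ deg_bound * (\<Sum>j\<in>{..<r}-{i}. v j) * (1/z0) ^ n * M i z0"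
      using frac_fixpoint_z0[OF i] unfolding v_def by (simp add: algebra_simps)
    also have "\<dots> = (\<Sum>k=1..deg_bound. real (factor_saw i k) * (z0 ^ deg_bound * (\<Sum>j\<in>{..<r}-{i}. v j) * (z0 ^ k * (1/z0) ^ n)))"
      unfolding M_eq_sum[OF i] sum_distrib_left by (intro sum.cong) (auto simp: algebra_simps)
    also have "\<dots> \<le> (\<Sum>k=1..deg_bound. real (factor_saw i k) * real (continuation_count i (n - k)))"
      using cont_ge by (intro sum_mono mult_left_mono) auto
    also have "\<dots> \<le> (\<Sum>k=1..n. real (factor_saw i k) * real (continuation_count i (n - k)))"
      using False by (intro sum_mono2) auto
    also have "\<dots> = real (branch_count i n)" using branch_count_rec_real[OF i n] by simp
    finally show ?thesis by (simp add: v_def)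
  qed
qed

theorem fp_saw_root_tendsto: "(\<lambda>n. root n (real (fp_saw V E rt r n))) \<longlonglongrightarrow> 1/z0"
proof (rule root_tendsto_of_exponential_bounds[OF z0(1)])
  have r0: "0 < r" using r_ge_2 by simp
  show "0 < z0 ^ deg_bound * (M 0 z0 / (1 + M 0 z0))"
    using M_pos[OF r0 z0(1)] z0(1) by simp
  fix n :: nat assume n: "1 \<le> n"
  have "z0 ^ deg_bound * (M 0 z0 / (1 + M 0 z0)) * (1/z0) ^ n \<le> real (branch_count 0 n)"
    using branch_count_lower[OF r0 n] .
  also have "\<dots> \<le> (\<Sum>j<r. real (branch_count j n))" using r0 by (intro member_le_sum) auto
  also have "\<dots> = real (fp_saw V E rt r n)" using fp_saw_eq_sum_branch_count[OF n] by simp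
  finally show "z0 ^ deg_bound * (M 0 z0 / (1 + M 0 z0)) * (1/z0) ^ n \<le> real (fp_saw V E rt r n)" .
next
  fix z assume z: "0 < z" "z < z0"
  have "0 < (\<Sum>i<r. branch_weight z i)"
    using branch_weight_pos[OF _ z] factors_nonempty by (intro sum_pos) auto
  moreover have "real (fp_saw V E rt r n) \<le> (\<Sum>i<r. branch_weight z i) * (1/z) ^ n" if n: "1 \<le> n" for n
  proof -
    have "real (fp_saw V E rt r n) = (\<Sum>i<r. real (branch_count i n))"
      using fp_saw_eq_sum_branch_count[OF n] by simp
    also have "\<dots> \<le> (\<Sum>i<r. branch_weight z i * (1/z) ^ n)"
      using branch_count_upper[OF z] by (intro sum_mono) auto
    finally show ?thesis by (simp add: sum_distrib_right)
  qed
  ultimately show "\<exists>S>0. \<forall>n\<ge>1. real (fp_saw V E rt r n) \<le> S * (1/z) ^ n" by blast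
qed

section \<open>Algebraicity\<close>

definition saw_poly :: "nat \<Rightarrow> int poly" where
  "saw_poly i = (\<Sum>k=1..card (V i) - 1. monom (int (factor_saw i k)) k)"

lemma degree_saw_poly: "degree (saw_poly i) \<le> card (V i) - 1"
  unfolding saw_poly_def by (rule degree_sum_le) (auto intro: order_trans[OF degree_monom_le])

lemma coeff_saw_poly_nonneg: "0 \<le> coeff (saw_poly i) n"
  unfolding saw_poly_def coeff_sum by (auto intro!: sum_nonneg simp: coeff_monom)

lemma Mgf_eq_poly_saw_poly:
  assumes i: "i < r"
  shows "M i z = poly (map_poly of_int (saw_poly i)) z"
proof -
  have "map_poly of_int (saw_poly i) = (\<Sum>k=1..card (V i) - 1. monom (real (factor_saw i k)) k)"
    by (rule poly_eqI)
       (simp add: coeff_map_poly saw_poly_def coeff_sum coeff_monom of_int_sum if_distrib cong: if_cong)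
  then show ?thesis
    using Mgf_eq_sum[OF i, of "card (V i) - 1"] by (simp add: poly_sum poly_monom)
qed

definition D_poly :: "real poly" where
  "D_poly = (let P = \<lambda>k. map_poly of_int (saw_poly k) in
     (\<Prod>k<r. 1 + P k) - (\<Sum>i<r. P i * (\<Prod>j\<in>{..<r}-{i}. 1 + P j)))"

lemma poly_D_poly: "poly D_poly z = Dfun V E rt r z"
proof -
  have "poly (map_poly of_int (saw_poly k)) z = M k z" if "k \<in> {..<r}" for k
    using Mgf_eq_poly_saw_poly that by simp
  then show ?thesis
    unfolding D_poly_def Dfun_def Let_def poly_diff poly_prod poly_sum poly_mult poly_add poly_1
    by (intro arg_cong2[where f = "(-)"] prod.cong sum.cong arg_cong2[where f = "(*)"]
          arg_cong2[where f = "(+)"]) auto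
qed

lemma int_coeffs_D_poly: "int_coeffs D_poly"
  unfolding D_poly_def Let_def
  by (intro int_coeffs_diff int_coeffs_prod int_coeffs_sum int_coeffs_mult int_coeffs_add
        int_coeffs_1 int_coeffs_of_int_poly)

lemma D_poly_nonzero: "D_poly \<noteq> 0"
proof
  assume "D_poly = 0"
  then have "Dfun V E rt r 0 = 0" using poly_D_poly[of 0] by simp
  then show False using Dfun_pos[of 0] z0(1) by simp
qed

lemma algebraic_z0: "algebraic z0"
  using int_coeffs_D_poly D_poly_nonzero Dfun_z0
  by (intro algebraicI[of D_poly]) (auto simp: int_coeffs_def poly_D_poly)

end

theorem corollary1:
  fixes V :: "nat \<Rightarrow> 'a set" and E :: "nat \<Rightarrow> 'a \<Rightarrow> 'a \<Rightarrow> bool" and rt :: "nat \<Rightarrow> 'a" and r :: nat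
  assumes r2: "r \<ge> 2"
    and fin: "\<And>i. i < r \<Longrightarrow> finite (V i)"
    and card2: "\<And>i. i < r \<Longrightarrow> card (V i) \<ge> 2"
    and root: "\<And>i. i < r \<Longrightarrow> rt i \<in> V i"
    and edges_in: "\<And>i x y. i < r \<Longrightarrow> E i x y \<Longrightarrow> x \<in> V i \<and> y \<in> V i"
    and sym: "\<And>i x y. i < r \<Longrightarrow> E i x y \<Longrightarrow> E i y x"
    and irrefl: "\<And>i x. i < r \<Longrightarrow> \<not> E i x x"
    and conn: "\<And>i x. i < r \<Longrightarrow> x \<in> V i \<Longrightarrow> (E i)\<^sup>*\<^sup>* (rt i) x"
  shows "(\<forall>i<r. \<exists>p :: int poly. degree p \<le> card (V i) - 1 \<and> (\<forall>n. coeff p n \<ge> 0)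
                     \<and> (\<forall>z. Mgf V E rt i z = poly (map_poly of_int p) z))
       \<and> (\<exists>z0 > 0. Dfun V E rt r z0 = 0 \<and> (\<forall>z. 0 < z \<and> z < z0 \<longrightarrow> Dfun V E rt r z \<noteq> 0)
            \<and> convergent (\<lambda>n. root n (real (fp_saw V E rt r n)))
            \<and> 1 / fp_connective_constant V E rt r = z0)
       \<and> algebraic (fp_connective_constant V E rt r)"
proof -
  interpret free_product V E rt r
    using r2 fin card2 root edges_in irrefl conn by unfold_locales
  have mu: "fp_connective_constant V E rt r = 1 / z0"
    unfolding fp_connective_constant_def using fp_saw_root_tendsto by (rule limI)
  have "\<forall>i<r. \<exists>p :: int poly. degree p \<le> card (V i) - 1 \<and> (\<forall>n. coeff p n \<ge> 0)
                     \<and> (\<forall>z. Mgf V E rt i z = poly (map_poly of_int p) z)"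
    using degree_saw_poly coeff_saw_poly_nonneg Mgf_eq_poly_saw_poly by (intro allI impI exI) auto
  moreover have "Dfun V E rt r z \<noteq> 0" if "0 < z" "z < z0" for z
    using Dfun_pos[of z] that by simp
  moreover have "convergent (\<lambda>n. root n (real (fp_saw V E rt r n)))"
    using fp_saw_root_tendsto by (rule convergentI)
  moreover have "algebraic (fp_connective_constant V E rt r)"
    using algebraic_inverse[OF algebraic_z0] mu by (simp add: inverse_eq_divide)
  ultimately show ?thesis
    using z0(1) Dfun_z0 mu by auto
qed

end
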